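(* For $n\ge3$ the Hilbert series of $K^{\infty}_n$ is $$\mathcal{H}^{[n]}_K(t)=\sum_{k\ge0}c^{[n]}_kt^k=\frac{1}{t^n\,\mathcal{K}_n(1/t)}.$$
   Context: $K^{\infty}_n=\langle y_1,\dots,y_n\mid y_iy_j=y_jy_i\ (j+2\le i\le n-1),\ y_ny_k=y_ky_n\ (1\le k\le n-3)\rangle$, and $c^{[n]}_k$ is the number of its elements of length $k$. $\mathcal{K}_n(\lambda)=\det(\lambda I_n-M_n)$ where $M_n$ is the $n\times n$ matrix with $(M_n)_{j,i}=1$ if $i\ge j-1$ or $(j,i)=(n,n-2)$, and $0$ otherwise. *)

theory Defs
  imports "Jordan_Normal_Form.Char_Poly" "HOL-Computational_Algebra.Polynomial_FPS"
begin

text \<open>Generators y_1..y_n are represented by the letters 1..n. The defining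
relations of the monoid are commutations of pairs of generators.\<close>

definition Kcomm :: "nat \<Rightarrow> nat \<Rightarrow> nat \<Rightarrow> bool" where
  "Kcomm n a b \<longleftrightarrow>
     (1 \<le> b \<and> b + 2 \<le> a \<and> a \<le> n - 1) \<or> (1 \<le> a \<and> a + 2 \<le> b \<and> b \<le> n - 1) \<or>
     (a = n \<and> 1 \<le> b \<and> b \<le> n - 3) \<or> (b = n \<and> 1 \<le> a \<and> a \<le> n - 3)"

definition Kstep :: "nat \<Rightarrow> (nat list \<times> nat list) set" where
  "Kstep n = {(us @ [a, b] @ vs, us @ [b, a] @ vs) | us vs a b. Kcomm n a b}"

definition Kequiv :: "nat \<Rightarrow> (nat list \<times> nat list) set" where
  "Kequiv n = (Kstep n \<union> (Kstep n)\<inverse>)\<^sup>*"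

definition Kwords :: "nat \<Rightarrow> nat \<Rightarrow> nat list set" where
  "Kwords n k = {xs. length xs = k \<and> set xs \<subseteq> {1..n}}"

text \<open>c^[n]_k: number of elements of length k of the monoid K^infty_n
  (relations are homogeneous, so length is well defined).\<close>
definition Kcount :: "nat \<Rightarrow> nat \<Rightarrow> nat" where
  "Kcount n k = card (Kwords n k // (Kequiv n \<inter> (Kwords n k \<times> Kwords n k)))"

text \<open>The matrix M_n (0-indexed): entry (j,i) is 1 iff i >= j-1 or (j,i) = (n,n-2)
  in 1-indexed terms.\<close>
definition Kmat :: "nat \<Rightarrow> int mat" where
  "Kmat n = mat n n (\<lambda>(j, i). if j \<le> i + 1 \<or> (j = n - 1 \<and> i = n - 3) then 1 else 0)"

definition Kpoly :: "nat \<Rightarrow> int poly" where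
  "Kpoly n = char_poly (Kmat n)"

text \<open>The polynomial t^n K_n(1/t).\<close>
definition Kpoly_rev :: "nat \<Rightarrow> int poly" where
  "Kpoly_rev n = (\<Sum>i\<le>n. monom (coeff (Kpoly n) (n - i)) i)"

end

theory Submission
  imports Defs
begin

(*
  K^infinity_n is the trace monoid (free partially commutative monoid) of the commutation relation
  Kcomm n. For any trace monoid the Cartier-Foata inversion holds: the letters that can start a
  given trace form a clique of the commutation graph, and inclusion-exclusion over the subcliques
  of this set vanishes unless the trace is empty, so the Hilbert series is the inverse of the
  clique polynomial, the sum of (-t)^|S| over all cliques S.
  It remains to identify this clique polynomial with t^n K_n(1/t). Row operations make
  lambda I - M_n tridiagonal, and its determinant satisfies the recurrence of the path 1 - ... - (n-1).
  Its solutions enumerate the sets of pairwise non-adjacent vertices of the path with signs, and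
  these sets, possibly together with y_n (which commutes exactly with y_1, ..., y_{n-3}), are the
  cliques of Kcomm n.
*)

lemma card_image_eq_kernel:
  assumes "\<And>x y. x \<in> A \<Longrightarrow> y \<in> A \<Longrightarrow> f x = f y \<longleftrightarrow> g x = g y"
  shows "card (f ` A) = card (g ` A)"
proof -
  let ?h = "\<lambda>y. f (inv_into A g y)"
  have h: "f (inv_into A g (g x)) = f x" if "x \<in> A" for x
  proof -
    have "inv_into A g (g x) \<in> A" "g (inv_into A g (g x)) = g x"
      using that by (auto intro: inv_into_into f_inv_into_f)
    then show ?thesis
      using assms that by simp
  qed
  have "inj_on ?h (g ` A)"
    by (rule inj_onI) (auto simp: h assms)
  moreover have "?h ` g ` A = f ` A"
    by (force simp: h image_iff)
  ultimately show ?thesis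
    using card_image by fastforce
qed

lemma sum_Pow_minus_one_power:
  assumes "finite A"
  shows "(\<Sum>S\<in>Pow A. (-1::int) ^ card S) = (if A = {} then 1 else 0)"
proof (cases "A = {}")
  case False
  then have "card {T \<in> Pow A. even (card T)} = card {T \<in> Pow A. odd (card T)}"
    using card_subsupersets_even_odd[OF assms, of "{}"] by (simp add: Pow_def psubset_eq)
  with False assms show ?thesis
    by (simp add: sum_alternating_cancels)
qed simp

lemma takeWhile_neq_append:
  "a \<notin> set p \<Longrightarrow> takeWhile (\<lambda>c. c \<noteq> a) (p @ q) = p @ takeWhile (\<lambda>c. c \<noteq> a) q"
  by (induction p) auto

lemma inj_on_insert_fresh: "(\<And>S. S \<in> F \<Longrightarrow> a \<notin> S) \<Longrightarrow> inj_on (insert a) F"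
  by (rule inj_onI) (metis insert_ident)

lemma sum_monom_reflect:
  fixes c :: "'b \<Rightarrow> 'a::comm_ring_1"
  assumes "finite F" "\<And>S. S \<in> F \<Longrightarrow> d S \<le> n"
  shows "(\<Sum>i\<le>n. monom (coeff (\<Sum>S\<in>F. monom (c S) (n - d S)) (n - i)) i) = (\<Sum>S\<in>F. monom (c S) (d S))"
proof (rule poly_eqI)
  fix j
  have "coeff (\<Sum>S\<in>F. monom (c S) (n - d S)) (n - j) = (\<Sum>S\<in>F. if d S = j then c S else 0)"
    if "j \<le> n"
    unfolding coeff_sum coeff_monom
  proof (intro sum.cong refl)
    fix S
    assume "S \<in> F"
    with assms(2)[OF \<open>S \<in> F\<close>] that show "(if n - d S = n - j then c S else 0) = (if d S = j then c S else 0)"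
      by auto
  qed
  moreover have "(\<Sum>S\<in>F. if d S = j then c S else 0) = 0" if "\<not> j \<le> n"
    using assms(2) that by (intro sum.neutral) auto
  ultimately show "coeff (\<Sum>i\<le>n. monom (coeff (\<Sum>S\<in>F. monom (c S) (n - d S)) (n - i)) i) j
      = coeff (\<Sum>S\<in>F. monom (c S) (d S)) j"
    unfolding coeff_sum[of _ F] coeff_monom by (simp add: coeff_sum)
qed

section \<open>Trace monoids\<close>

locale trace_monoid =
  fixes I :: "'a \<Rightarrow> 'a \<Rightarrow> bool"
  assumes commute_sym: "I a b \<Longrightarrow> I b a"
    and commute_irrefl: "\<not> I a a"
begin

definition swap_step :: "('a list \<times> 'a list) set" where
  "swap_step = {(us @ [a, b] @ vs, us @ [b, a] @ vs) | us vs a b. I a b}"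

definition trace_eq :: "('a list \<times> 'a list) set" where
  "trace_eq = (swap_step \<union> swap_step\<inverse>)\<^sup>*"

abbreviation trace_equiv :: "'a list \<Rightarrow> 'a list \<Rightarrow> bool" (infix "\<simeq>" 50) where
  "x \<simeq> y \<equiv> (x, y) \<in> trace_eq"

lemma swap_step_sym: "(x, y) \<in> swap_step \<Longrightarrow> (y, x) \<in> swap_step"
  unfolding swap_step_def by (blast dest: commute_sym)

lemma trace_eq_rtrancl: "trace_eq = swap_step\<^sup>*"
proof -
  have "swap_step \<union> swap_step\<inverse> = swap_step"
    using swap_step_sym by blast
  then show ?thesis
    by (simp add: trace_eq_def)
qed

lemma equiv_trace_eq: "equiv UNIV trace_eq"
  unfolding trace_eq_def
  by (simp add: equivI refl_rtrancl sym_rtrancl[OF sym_Un_converse] trans_rtrancl)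

lemma trace_eq_refl [simp]: "x \<simeq> x"
  by (simp add: trace_eq_rtrancl)

lemma trace_eq_sym: "x \<simeq> y \<Longrightarrow> y \<simeq> x"
  using equiv_trace_eq by (auto simp: equiv_def sym_def)

lemma trace_eq_trans: "x \<simeq> y \<Longrightarrow> y \<simeq> z \<Longrightarrow> x \<simeq> z"
  by (simp add: trace_eq_rtrancl)

lemma swap_step_append: "(x, y) \<in> swap_step \<Longrightarrow> (p @ x @ q, p @ y @ q) \<in> swap_step"
  unfolding swap_step_def by clarsimp (metis append.assoc)

lemma trace_eq_append: "x \<simeq> y \<Longrightarrow> p @ x @ q \<simeq> p @ y @ q"
  unfolding trace_eq_rtrancl
  by (induction rule: rtrancl_induct) (auto intro: rtrancl_into_rtrancl swap_step_append)

lemma trace_eq_Cons: "x \<simeq> y \<Longrightarrow> c # x \<simeq> c # y"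
  using trace_eq_append[of x y "[c]" "[]"] by simp

lemma trace_eq_length: "x \<simeq> y \<Longrightarrow> length x = length y"
  unfolding trace_eq_rtrancl
  by (induction rule: rtrancl_induct) (auto simp: swap_step_def)

lemma trace_eq_set: "x \<simeq> y \<Longrightarrow> set x = set y"
  unfolding trace_eq_rtrancl
  by (induction rule: rtrancl_induct) (auto simp: swap_step_def)

lemma trace_eq_commute: "I a b \<Longrightarrow> a # b # q \<simeq> b # a # q"
  unfolding trace_eq_rtrancl swap_step_def by (rule r_into_rtrancl) force

lemma trace_eq_move_to_front: "\<forall>c\<in>set p. I a c \<Longrightarrow> p @ a # q \<simeq> a # p @ q"
proof (induction p)
  case (Cons c p)
  then have "c # p @ a # q \<simeq> c # a # p @ q"
    by (simp add: trace_eq_Cons)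
  moreover have "c # a # p @ q \<simeq> a # c # p @ q"
    using Cons.prems by (simp add: trace_eq_commute commute_sym)
  ultimately show ?case
    using trace_eq_trans by simp
qed simp

definition leads :: "'a \<Rightarrow> 'a list \<Rightarrow> bool" where
  "leads a x \<longleftrightarrow> a \<in> set x \<and> (\<forall>c\<in>set (takeWhile (\<lambda>c. c \<noteq> a) x). I a c)"

lemma leads_Cons [simp]: "leads a (a # x)"
  by (simp add: leads_def)

lemma leads_swap_step:
  assumes step: "(x, y) \<in> swap_step" and "leads a x"
  shows "leads a y \<and> remove1 a x \<simeq> remove1 a y"
proof -
  obtain us vs c d where x: "x = us @ [c, d] @ vs" and y: "y = us @ [d, c] @ vs"
    and cd: "I c d"
    using step unfolding swap_step_def by blast
  have "c \<noteq> d"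
    using cd commute_irrefl by metis
  consider "a \<in> set us" | "a \<notin> set us" "a = c" | "a \<notin> set us" "a = d"
    | "a \<notin> set us" "a \<noteq> c" "a \<noteq> d"
    by blast
  then show ?thesis
  proof cases
    case 1
    then have "remove1 a x = remove1 a us @ [c, d] @ vs" "remove1 a y = remove1 a us @ [d, c] @ vs"
      unfolding x y by (auto simp: remove1_append)
    moreover have "c # d # vs \<simeq> d # c # vs"
      using cd by (rule trace_eq_commute)
    ultimately have "remove1 a x \<simeq> remove1 a y"
      using trace_eq_append[of "c # d # vs" "d # c # vs" "remove1 a us" "[]"] by simp
    with 1 \<open>leads a x\<close> show ?thesis
      unfolding leads_def x y by (simp add: takeWhile_append1)
  next
    case 2
    with \<open>leads a x\<close> \<open>c \<noteq> d\<close> cd show ?thesis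
      unfolding leads_def x y by (simp add: takeWhile_neq_append remove1_append)
  next
    case 3
    with \<open>leads a x\<close> \<open>c \<noteq> d\<close> show ?thesis
      unfolding leads_def x y by (simp add: takeWhile_neq_append remove1_append)
  next
    case 4
    then have "remove1 a x = us @ [c, d] @ remove1 a vs" "remove1 a y = us @ [d, c] @ remove1 a vs"
      unfolding x y by (auto simp: remove1_append)
    moreover have "c # d # remove1 a vs \<simeq> d # c # remove1 a vs"
      using cd by (rule trace_eq_commute)
    ultimately have "remove1 a x \<simeq> remove1 a y"
      using trace_eq_append[of "c # d # remove1 a vs" "d # c # remove1 a vs" us "[]"] by simp
    with 4 \<open>leads a x\<close> show ?thesis
      unfolding leads_def x y by (auto simp: takeWhile_neq_append)
  qed
qed

lemma leads_trace_eq: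
  assumes "x \<simeq> y" "leads a x"
  shows "leads a y \<and> remove1 a x \<simeq> remove1 a y"
  using assms(1)[unfolded trace_eq_rtrancl] assms(2)
proof (induction rule: rtrancl_induct)
  case (step y z)
  then show ?case
    using leads_swap_step trace_eq_trans by blast
qed simp

lemma leads_imp_trace_eq: "leads a x \<Longrightarrow> x \<simeq> a # remove1 a x"
proof -
  assume lead: "leads a x"
  then obtain p q where x: "x = p @ a # q" and "a \<notin> set p"
    unfolding leads_def by (meson split_list_first)
  then have "takeWhile (\<lambda>c. c \<noteq> a) x = p" "remove1 a x = p @ q"
    by (simp_all add: takeWhile_neq_append remove1_append)
  with lead x show ?thesis
    unfolding leads_def by (simp add: trace_eq_move_to_front)
qed

lemma trace_eq_Cons_cancel: "a # u \<simeq> a # v \<Longrightarrow> u \<simeq> v"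
  using leads_trace_eq[of "a # u" "a # v" a] by simp

lemma trace_eq_prepend_iff: "p @ u \<simeq> p @ v \<longleftrightarrow> u \<simeq> v"
proof
  show "p @ u \<simeq> p @ v \<Longrightarrow> u \<simeq> v"
    by (induction p) (auto dest: trace_eq_Cons_cancel)
  show "u \<simeq> v \<Longrightarrow> p @ u \<simeq> p @ v"
    using trace_eq_append[of u v p "[]"] by simp
qed

lemma trace_eq_Cons_Cons:
  assumes eq: "a # u \<simeq> b # v" and "a \<noteq> b"
  shows "I a b \<and> (\<exists>w. u \<simeq> b # w \<and> v \<simeq> a # w)"
proof -
  have lead: "leads a (b # v)" and rem: "u \<simeq> b # remove1 a v"
    using leads_trace_eq[OF eq leads_Cons] \<open>a \<noteq> b\<close> by auto
  then have "I a b" "leads a v"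
    using \<open>a \<noteq> b\<close> unfolding leads_def by auto
  with rem show ?thesis
    using leads_imp_trace_eq by blast
qed

definition initials :: "'a list \<Rightarrow> 'a set" where
  "initials x = {a. \<exists>v. x \<simeq> a # v}"

lemma initials_append_notin: "a \<in> initials (p @ u) \<Longrightarrow> a \<notin> set p \<Longrightarrow> a \<in> initials u"
proof (induction p)
  case (Cons b p)
  then obtain v where "a # v \<simeq> b # p @ u" "a \<noteq> b"
    unfolding initials_def using trace_eq_sym by fastforce
  then obtain w where "p @ u \<simeq> a # w"
    using trace_eq_Cons_Cons by blast
  with Cons show ?case
    unfolding initials_def by auto
qed simp

definition clique :: "'a set \<Rightarrow> bool" where
  "clique S \<longleftrightarrow> (\<forall>a\<in>S. \<forall>b\<in>S. a \<noteq> b \<longrightarrow> I a b)"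

lemma clique_initials: "clique (initials x)"
  unfolding clique_def
proof (intro ballI impI)
  fix a b
  assume "a \<in> initials x" "b \<in> initials x" "a \<noteq> b"
  then obtain v w where "x \<simeq> a # v" "x \<simeq> b # w"
    unfolding initials_def by blast
  then have "a # v \<simeq> b # w"
    using trace_eq_sym trace_eq_trans by blast
  with \<open>a \<noteq> b\<close> show "I a b"
    using trace_eq_Cons_Cons by blast
qed

lemma subset_initials_iff:
  assumes "distinct s" "clique (set s)"
  shows "set s \<subseteq> initials x \<longleftrightarrow> (\<exists>u. x \<simeq> s @ u)"
proof
  show "set s \<subseteq> initials x \<Longrightarrow> \<exists>u. x \<simeq> s @ u"
    using assms
  proof (induction s)
    case (Cons a s)
    then obtain u where u: "x \<simeq> s @ u"
      by (auto simp: clique_def)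
    have "a \<in> initials (s @ u)"
      using Cons.prems(1) u unfolding initials_def
      by (auto intro: trace_eq_trans[OF trace_eq_sym])
    then have "a \<in> initials u"
      using initials_append_notin Cons.prems(2) by simp
    then obtain u' where "u \<simeq> a # u'"
      unfolding initials_def by blast
    then have "x \<simeq> s @ a # u'"
      using u trace_eq_append[of u "a # u'" s "[]"] trace_eq_trans by simp
    moreover have "s @ a # u' \<simeq> (a # s) @ u'"
      using Cons.prems(2,3) by (auto simp: clique_def intro: trace_eq_move_to_front)
    ultimately show ?case
      using trace_eq_trans by blast
  qed (metis append_Nil trace_eq_refl)
next
  assume "\<exists>u. x \<simeq> s @ u"
  then obtain u where u: "x \<simeq> s @ u" ..
  show "set s \<subseteq> initials x"
  proof
    fix a
    assume "a \<in> set s"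
    then obtain p q where s: "s = p @ a # q" "a \<notin> set p"
      by (meson split_list_first)
    with assms have "s @ u \<simeq> a # p @ q @ u"
      by (auto simp: clique_def intro: trace_eq_move_to_front)
    with u show "a \<in> initials x"
      unfolding initials_def using trace_eq_trans by blast
  qed
qed

definition words :: "'a set \<Rightarrow> nat \<Rightarrow> 'a list set" where
  "words A k = {x. length x = k \<and> set x \<subseteq> A}"

definition traces :: "'a set \<Rightarrow> nat \<Rightarrow> 'a list set set" where
  "traces A k = words A k // trace_eq"

definition class_initials :: "'a list set \<Rightarrow> 'a set" where
  "class_initials X = {a. \<exists>v. a # v \<in> X}"

definition cliques :: "'a set \<Rightarrow> 'a set set" where
  "cliques A = {S. S \<subseteq> A \<and> clique S}"

definition clique_poly :: "'a set \<Rightarrow> int poly" where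
  "clique_poly A = (\<Sum>S\<in>cliques A. monom ((-1) ^ card S) (card S))"

lemma finite_words: "finite A \<Longrightarrow> finite (words A k)"
  using finite_lists_length_eq[of A k] by (simp add: words_def conj_commute)

lemma finite_traces: "finite A \<Longrightarrow> finite (traces A k)"
  by (simp add: traces_def quotient_def finite_words)

lemma finite_cliques: "finite A \<Longrightarrow> finite (cliques A)"
  by (rule finite_subset[of _ "Pow A"]) (auto simp: cliques_def)

lemma traces_eq_image: "traces A k = (\<lambda>x. trace_eq `` {x}) ` words A k"
  by (auto simp: traces_def quotient_def)

lemma words_trace_eq: "x \<in> words A k \<Longrightarrow> x \<simeq> y \<Longrightarrow> y \<in> words A k"
  unfolding words_def using trace_eq_length trace_eq_set by fastforce

lemma class_initials_Image: "class_initials (trace_eq `` {x}) = initials x"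
  by (simp add: class_initials_def initials_def)

lemma class_eq_iff: "trace_eq `` {x} = trace_eq `` {y} \<longleftrightarrow> x \<simeq> y"
  using eq_equiv_class_iff[OF equiv_trace_eq] by simp

lemma class_initials_in_cliques:
  assumes "X \<in> traces A k"
  shows "class_initials X \<in> cliques A"
proof -
  obtain x where x: "x \<in> words A k" "X = trace_eq `` {x}"
    using assms by (auto simp: traces_eq_image)
  have "initials x \<subseteq> set x"
    unfolding initials_def using trace_eq_set by fastforce
  with x show ?thesis
    unfolding cliques_def words_def by (auto simp: class_initials_Image clique_initials)
qed

lemma class_initials_eq_empty_iff:
  assumes "X \<in> traces A k"
  shows "class_initials X = {} \<longleftrightarrow> k = 0"
proof -
  obtain x where x: "x \<in> words A k" "X = trace_eq `` {x}"
    using assms by (auto simp: traces_eq_image)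
  have "initials x = {} \<longleftrightarrow> x = []"
  proof (cases x)
    case (Cons a v)
    then have "a \<in> initials x"
      by (auto simp: initials_def intro: trace_eq_refl)
    with Cons show ?thesis
      by blast
  qed (auto simp: initials_def dest: trace_eq_length)
  with x show ?thesis
    by (auto simp: class_initials_Image words_def)
qed

lemma traces_with_initials_eq_image:
  assumes "distinct s" "clique (set s)" "set s \<subseteq> A" "length s \<le> k"
  shows "{X \<in> traces A k. set s \<subseteq> class_initials X} = (\<lambda>u. trace_eq `` {s @ u}) ` words A (k - length s)"
proof (intro equalityI subsetI)
  fix X
  assume "X \<in> {X \<in> traces A k. set s \<subseteq> class_initials X}"
  then obtain x where x: "x \<in> words A k" "X = trace_eq `` {x}" "set s \<subseteq> initials x"
    by (auto simp: traces_eq_image class_initials_Image)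
  then obtain u where u: "x \<simeq> s @ u"
    using subset_initials_iff[OF assms(1,2)] by blast
  then have "u \<in> words A (k - length s)"
    using words_trace_eq[OF x(1) u] by (auto simp: words_def)
  moreover have "X = trace_eq `` {s @ u}"
    using x(2) u by (simp add: class_eq_iff)
  ultimately show "X \<in> (\<lambda>u. trace_eq `` {s @ u}) ` words A (k - length s)"
    by blast
next
  fix X
  assume "X \<in> (\<lambda>u. trace_eq `` {s @ u}) ` words A (k - length s)"
  then obtain u where u: "u \<in> words A (k - length s)" "X = trace_eq `` {s @ u}"
    by blast
  have "s @ u \<in> words A k"
    using u(1) assms(3,4) by (auto simp: words_def)
  moreover have "set s \<subseteq> initials (s @ u)"
    using subset_initials_iff[OF assms(1,2), of "s @ u"] trace_eq_refl[of "s @ u"] by blast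
  ultimately show "X \<in> {X \<in> traces A k. set s \<subseteq> class_initials X}"
    using u(2) by (auto simp: traces_eq_image class_initials_Image)
qed

lemma traces_with_initials_eq_empty:
  assumes "distinct s" "clique (set s)" "k < length s"
  shows "{X \<in> traces A k. set s \<subseteq> class_initials X} = {}"
proof -
  have "\<not> set s \<subseteq> initials x" if "x \<in> words A k" for x
  proof
    assume "set s \<subseteq> initials x"
    then obtain u where "x \<simeq> s @ u"
      using subset_initials_iff[OF assms(1,2)] by blast
    then have "length x = length s + length u"
      using trace_eq_length by fastforce
    with that assms(3) show False
      by (simp add: words_def)
  qed
  then show ?thesis
    by (auto simp: traces_eq_image class_initials_Image)
qed

lemma card_traces_prepend: "card ((\<lambda>u. trace_eq `` {s @ u}) ` words A k) = card (traces A k)"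
  unfolding traces_eq_image
  by (rule card_image_eq_kernel) (simp only: class_eq_iff trace_eq_prepend_iff)

lemma card_traces_with_initials:
  assumes "S \<in> cliques A" "finite A"
  shows "card {X \<in> traces A k. S \<subseteq> class_initials X}
           = (if card S \<le> k then card (traces A (k - card S)) else 0)"
proof -
  have "S \<subseteq> A" "clique S"
    using assms(1) by (simp_all add: cliques_def)
  have "finite S"
    using \<open>S \<subseteq> A\<close> assms(2) by (rule finite_subset)
  then obtain s where s: "set s = S" "distinct s"
    using finite_distinct_list by blast
  then have "length s = card S"
    using distinct_card by metis
  show ?thesis
  proof (cases "card S \<le> k")
    case True
    then show ?thesis
      using traces_with_initials_eq_image[of s A k] s \<open>S \<subseteq> A\<close> \<open>clique S\<close> \<open>length s = card S\<close>
      by (simp add: card_traces_prepend)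
  next
    case False
    then have empty: "{X \<in> traces A k. S \<subseteq> class_initials X} = {}"
      using traces_with_initials_eq_empty[of s k A] s \<open>clique S\<close> \<open>length s = card S\<close> by simp
    show ?thesis
      using False by (simp add: empty)
  qed
qed

lemma sum_cliques_subset_class_initials:
  assumes "finite A" "X \<in> traces A k"
  shows "(\<Sum>S\<in>cliques A. if S \<subseteq> class_initials X then (-1::int) ^ card S else 0) = (if k = 0 then 1 else 0)"
proof -
  have "class_initials X \<subseteq> A" "clique (class_initials X)"
    using class_initials_in_cliques[OF assms(2)] by (simp_all add: cliques_def)
  then have "cliques A \<inter> {S. S \<subseteq> class_initials X} = Pow (class_initials X)"
    by (auto simp: cliques_def clique_def)
  moreover have "finite (class_initials X)"
    using \<open>class_initials X \<subseteq> A\<close> assms(1) by (rule finite_subset)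
  ultimately show ?thesis
    using assms by (simp add: sum.If_cases finite_cliques sum_Pow_minus_one_power class_initials_eq_empty_iff)
qed

theorem cartier_foata_inversion:
  assumes "finite A"
  shows "(\<Sum>S\<in>cliques A. (-1) ^ card S * (if card S \<le> k then int (card (traces A (k - card S))) else 0))
           = (if k = 0 then 1 else 0)"
proof -
  have "(\<Sum>S\<in>cliques A. (-1) ^ card S * (if card S \<le> k then int (card (traces A (k - card S))) else 0))
      = (\<Sum>S\<in>cliques A. \<Sum>X\<in>traces A k. if S \<subseteq> class_initials X then (-1) ^ card S else 0)"
  proof (rule sum.cong[OF refl])
    fix S
    assume "S \<in> cliques A"
    have "(\<Sum>X\<in>traces A k. if S \<subseteq> class_initials X then (-1::int) ^ card S else 0)
        = (-1) ^ card S * int (card {X \<in> traces A k. S \<subseteq> class_initials X})"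
      using assms by (simp add: finite_traces sum.If_cases Int_def)
    with card_traces_with_initials[OF \<open>S \<in> cliques A\<close> assms]
    show "(-1) ^ card S * (if card S \<le> k then int (card (traces A (k - card S))) else 0)
        = (\<Sum>X\<in>traces A k. if S \<subseteq> class_initials X then (-1) ^ card S else 0)"
      by simp
  qed
  also have "\<dots> = (\<Sum>X\<in>traces A k. \<Sum>S\<in>cliques A. if S \<subseteq> class_initials X then (-1) ^ card S else 0)"
    by (rule sum.swap)
  also have "\<dots> = (\<Sum>X\<in>traces A k. if k = 0 then 1 else 0)"
    using assms by (intro sum.cong refl) (simp add: sum_cliques_subset_class_initials)
  also have "\<dots> = (if k = 0 then 1 else 0)"
  proof -
    have "words A 0 = {[]}"
      by (auto simp: words_def)
    then show ?thesis
      by (simp add: traces_def singleton_quotient)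
  qed
  finally show ?thesis .
qed

lemma coeff_clique_poly: "coeff (clique_poly A) i = (\<Sum>S\<in>cliques A. if card S = i then (-1) ^ card S else 0)"
  unfolding clique_poly_def coeff_sum coeff_monom by simp

theorem clique_poly_times_hilbert_series:
  assumes "finite A"
  shows "fps_of_poly (map_poly of_int (clique_poly A)) * Abs_fps (\<lambda>k. of_nat (card (traces A k)))
           = (1 :: 'b::comm_ring_1 fps)"
proof (rule fps_ext)
  fix k
  have "(\<Sum>i=0..k. coeff (clique_poly A) i * int (card (traces A (k - i))))
      = (\<Sum>S\<in>cliques A. \<Sum>i=0..k. if i = card S then (-1) ^ card S * int (card (traces A (k - i))) else 0)"
    unfolding coeff_clique_poly sum_distrib_right sum.swap[of _ "{0..k}"]
    by (intro sum.cong refl) auto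
  also have "\<dots> = (\<Sum>S\<in>cliques A. (-1) ^ card S * (if card S \<le> k then int (card (traces A (k - card S))) else 0))"
    by (intro sum.cong refl) (simp add: sum.delta')
  also have "\<dots> = (if k = 0 then 1 else 0)"
    using assms by (rule cartier_foata_inversion)
  finally have convolution: "(\<Sum>i=0..k. coeff (clique_poly A) i * int (card (traces A (k - i))))
      = (if k = 0 then 1 else 0)" .
  have "fps_nth (fps_of_poly (map_poly of_int (clique_poly A)) * Abs_fps (\<lambda>k. of_nat (card (traces A k)))) k
      = (\<Sum>i=0..k. of_int (coeff (clique_poly A) i) * of_nat (card (traces A (k - i))))"
    by (simp add: fps_mult_nth coeff_map_poly)
  also have "\<dots> = (of_int (\<Sum>i=0..k. coeff (clique_poly A) i * int (card (traces A (k - i)))) :: 'b)"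
    by simp
  also have "\<dots> = fps_nth 1 k"
    unfolding convolution by simp
  finally show "fps_nth (fps_of_poly (map_poly of_int (clique_poly A)) * Abs_fps (\<lambda>k. of_nat (card (traces A k)))) k
      = fps_nth (1 :: 'b fps) k" .
qed

end

section \<open>Tridiagonal determinants\<close>

definition tridiag :: "nat \<Rightarrow> (nat \<Rightarrow> 'a::comm_ring_1) \<Rightarrow> (nat \<Rightarrow> 'a) \<Rightarrow> (nat \<Rightarrow> 'a) \<Rightarrow> 'a mat" where
  "tridiag m d u l = mat m m (\<lambda>(i, j). if i = j then d i else if j = Suc i then u i
      else if i = Suc j then l j else 0)"

fun continuant :: "(nat \<Rightarrow> 'a::comm_ring_1) \<Rightarrow> (nat \<Rightarrow> 'a) \<Rightarrow> (nat \<Rightarrow> 'a) \<Rightarrow> nat \<Rightarrow> 'a" where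
  "continuant d u l 0 = 1"
| "continuant d u l (Suc 0) = d 0"
| "continuant d u l (Suc (Suc m)) = d (Suc m) * continuant d u l (Suc m) - u m * l m * continuant d u l m"

lemma tridiag_carrier [simp]: "tridiag m d u l \<in> carrier_mat m m"
  unfolding tridiag_def by simp

lemma det_tridiag: "det (tridiag m d u l) = continuant d u l m"
proof (induction d u l m rule: continuant.induct)
  case (1 d u l)
  show ?case
    by (simp add: det_dim_zero[of "tridiag 0 d u l"])
next
  case (2 d u l)
  show ?case
    by (subst det_single) (auto simp: tridiag_def)
next
  case (3 d u l m)
  let ?A = "tridiag (Suc (Suc m)) d u l"
  let ?N = "mat_delete ?A m (Suc m)"
  have minor_last: "mat_delete ?A (Suc m) (Suc m) = tridiag (Suc m) d u l"
    by (rule eq_matI) (auto simp: mat_delete_def tridiag_def)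
  have minor_super: "mat_delete ?N m m = tridiag m d u l"
    by (rule eq_matI) (auto simp: mat_delete_def tridiag_def)
  have "det ?N = (\<Sum>j<Suc m. ?N $$ (m, j) * cofactor ?N m j)"
    by (rule laplace_expansion_row) (auto simp: mat_delete_def tridiag_def)
  also have "\<dots> = l m * continuant d u l m"
    using 3(2) minor_super
    by (simp add: lessThan_Suc sum.neutral cofactor_def mat_delete_def tridiag_def)
  finally have det_N: "det ?N = l m * continuant d u l m" .
  have "det ?A = (\<Sum>i<Suc (Suc m). ?A $$ (i, Suc m) * cofactor ?A i (Suc m))"
    by (rule laplace_expansion_column) auto
  also have "\<dots> = u m * cofactor ?A m (Suc m) + d (Suc m) * cofactor ?A (Suc m) (Suc m)"
    by (simp add: lessThan_Suc sum.neutral tridiag_def)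
  finally show ?case
    using 3(1) det_N minor_last by (simp add: cofactor_def algebra_simps)
qed

text \<open>Rows are processed top-down, so row \<open>i < k\<close> loses the original row \<open>i + 1\<close>.\<close>

fun sub_next_rows :: "nat \<Rightarrow> 'a::comm_ring_1 mat \<Rightarrow> 'a mat" where
  "sub_next_rows 0 A = A"
| "sub_next_rows (Suc k) A = addrow (-1) k (Suc k) (sub_next_rows k A)"

lemma sub_next_rows_dims [simp]:
  "dim_row (sub_next_rows k A) = dim_row A" "dim_col (sub_next_rows k A) = dim_col A"
  by (induction k) auto

lemma sub_next_rows_carrier [simp]: "A \<in> carrier_mat n n \<Longrightarrow> sub_next_rows k A \<in> carrier_mat n n"
  by (induction k) auto

lemma sub_next_rows_index:
  assumes "A \<in> carrier_mat n n" "k < n" "i < n" "j < n"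
  shows "sub_next_rows k A $$ (i, j) = (if i < k then A $$ (i, j) - A $$ (Suc i, j) else A $$ (i, j))"
  using assms(2-)
proof (induction k arbitrary: i)
  case (Suc k)
  with assms(1) show ?case
    by auto
qed simp

lemma det_sub_next_rows:
  assumes "A \<in> carrier_mat n n" "k < n"
  shows "det (sub_next_rows k A) = det A"
  using assms(2)
proof (induction k)
  case (Suc k)
  then have "det (sub_next_rows (Suc k) A) = det (sub_next_rows k A)"
    using assms(1) by (simp add: det_addrow[of _ n])
  with Suc show ?case
    by simp
qed simp

lemma sub_next_rows_addrow_index:
  assumes "A \<in> carrier_mat n n" "n \<ge> 2" "i < n" "j < n"
  shows "sub_next_rows (n - 2) (addrow (-1) (n - 1) (n - 2) A) $$ (i, j)
    = (if i < n - 2 then A $$ (i, j) - A $$ (Suc i, j)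
       else if i = n - 2 then A $$ (i, j) else A $$ (i, j) - A $$ (n - 2, j))"
proof -
  let ?B = "addrow (-1) (n - 1) (n - 2) A"
  have B: "?B \<in> carrier_mat n n"
    using assms(1) by simp
  have B_index: "?B $$ (k, j) = (if k = n - 1 then A $$ (k, j) - A $$ (n - 2, j) else A $$ (k, j))"
    if "k < n" for k
    using that assms(1,4) by auto
  have reduced: "sub_next_rows (n - 2) ?B $$ (i, j)
      = (if i < n - 2 then ?B $$ (i, j) - ?B $$ (Suc i, j) else ?B $$ (i, j))"
    using assms by (intro sub_next_rows_index[OF B]) auto
  show ?thesis
  proof (cases "i < n - 2")
    case True
    then have "Suc i < n" "i \<noteq> n - 1" "Suc i \<noteq> n - 1"
      by auto
    with True show ?thesis
      unfolding reduced B_index[OF assms(3)] B_index[OF \<open>Suc i < n\<close>] by simp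
  next
    case False
    with assms(2,3) show ?thesis
      unfolding reduced B_index[OF assms(3)] by auto
  qed
qed

section \<open>The monoid \<open>K\<^sup>\<infinity>\<^sub>n\<close>\<close>

interpretation K: trace_monoid "Kcomm n" for n
  by unfold_locales (auto simp: Kcomm_def)

lemma Kcomm_less_iff:
  assumes "1 \<le> a" "a < b" "b \<le> n"
  shows "Kcomm n a b \<longleftrightarrow> (if b = n then a + 3 \<le> n else Suc a < b)"
  using assms unfolding Kcomm_def by auto

lemma Kclique_iff_less: "K.clique n S \<longleftrightarrow> (\<forall>a\<in>S. \<forall>b\<in>S. a < b \<longrightarrow> Kcomm n a b)"
  unfolding K.clique_def
proof (intro iffI ballI impI)
  fix a b
  assume less: "\<forall>a\<in>S. \<forall>b\<in>S. a < b \<longrightarrow> Kcomm n a b" and "a \<in> S" "b \<in> S" "a \<noteq> b"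
  then consider "a < b" | "b < a"
    by linarith
  then show "Kcomm n a b"
    using less \<open>a \<in> S\<close> \<open>b \<in> S\<close> by cases (auto intro: K.commute_sym)
qed auto

lemma Kcliques_iff:
  "S \<in> K.cliques n {1..n} \<longleftrightarrow> S \<subseteq> {1..n} \<and>
     (\<forall>a\<in>S. \<forall>b\<in>S. a < b \<longrightarrow> (if b = n then a + 3 \<le> n else Suc a < b))"
proof -
  have "(\<forall>a\<in>S. \<forall>b\<in>S. a < b \<longrightarrow> Kcomm n a b)
      \<longleftrightarrow> (\<forall>a\<in>S. \<forall>b\<in>S. a < b \<longrightarrow> (if b = n then a + 3 \<le> n else Suc a < b))"
    if "S \<subseteq> {1..n}"
    using that Kcomm_less_iff by (auto simp: subset_iff)
  then show ?thesis
    by (auto simp: K.cliques_def Kclique_iff_less)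
qed

definition path_indep_sets :: "nat \<Rightarrow> nat set set" where
  "path_indep_sets m = {S. S \<subseteq> {1..m} \<and> (\<forall>a\<in>S. \<forall>b\<in>S. a < b \<longrightarrow> Suc a < b)}"

lemma notin_path_indep_sets: "S \<in> path_indep_sets m \<Longrightarrow> m < a \<Longrightarrow> a \<notin> S"
  by (auto simp: path_indep_sets_def)

lemma path_indep_sets_iff_Kcliques:
  assumes "n \<ge> 3" "n \<notin> S"
  shows "S \<in> path_indep_sets (n - 1) \<longleftrightarrow> S \<in> K.cliques n {1..n}"
proof -
  have "x \<in> {1..n} \<longleftrightarrow> x \<in> {1..n - 1} \<or> x = n" for x
    using assms(1) by auto
  then have "S \<subseteq> {1..n} \<longleftrightarrow> S \<subseteq> {1..n - 1}"
    using assms(2) by blast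
  moreover have "(\<forall>a\<in>S. \<forall>b\<in>S. a < b \<longrightarrow> (if b = n then a + 3 \<le> n else Suc a < b))
      \<longleftrightarrow> (\<forall>a\<in>S. \<forall>b\<in>S. a < b \<longrightarrow> Suc a < b)"
    using assms(2) by metis
  ultimately show ?thesis
    unfolding Kcliques_iff path_indep_sets_def mem_Collect_eq by simp
qed

lemma insert_in_Kcliques_iff:
  assumes "n \<ge> 3" "n \<notin> T"
  shows "insert n T \<in> K.cliques n {1..n} \<longleftrightarrow> T \<in> path_indep_sets (n - 3)"
  unfolding Kcliques_iff path_indep_sets_def mem_Collect_eq
proof
  assume K: "insert n T \<subseteq> {1..n} \<and>
    (\<forall>a\<in>insert n T. \<forall>b\<in>insert n T. a < b \<longrightarrow> (if b = n then a + 3 \<le> n else Suc a < b))"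
  have "a \<in> {1..n - 3}" if "a \<in> T" for a
  proof -
    have "a < n" "1 \<le> a"
      using K that assms(2) by (auto simp: subset_iff order.order_iff_strict)
    then show ?thesis
      using K that by auto
  qed
  moreover have "Suc a < b" if "a \<in> T" "b \<in> T" "a < b" for a b
    using K that assms(2) by (metis insertI2)
  ultimately show "T \<subseteq> {1..n - 3} \<and> (\<forall>a\<in>T. \<forall>b\<in>T. a < b \<longrightarrow> Suc a < b)"
    by blast
next
  assume "T \<subseteq> {1..n - 3} \<and> (\<forall>a\<in>T. \<forall>b\<in>T. a < b \<longrightarrow> Suc a < b)"
  then show "insert n T \<subseteq> {1..n} \<and>
    (\<forall>a\<in>insert n T. \<forall>b\<in>insert n T. a < b \<longrightarrow> (if b = n then a + 3 \<le> n else Suc a < b))"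
    using assms(1) by (fastforce simp: subset_iff)
qed

lemma Kcliques_eq:
  assumes "n \<ge> 3"
  shows "K.cliques n {1..n} = path_indep_sets (n - 1) \<union> insert n ` path_indep_sets (n - 3)"
proof (intro equalityI subsetI)
  fix S
  assume S: "S \<in> K.cliques n {1..n}"
  show "S \<in> path_indep_sets (n - 1) \<union> insert n ` path_indep_sets (n - 3)"
  proof (cases "n \<in> S")
    case True
    then have "S = insert n (S - {n})"
      by blast
    with S have "S - {n} \<in> path_indep_sets (n - 3)"
      using insert_in_Kcliques_iff[OF assms, of "S - {n}"] by auto
    with \<open>S = insert n (S - {n})\<close> show ?thesis
      by blast
  qed (use S path_indep_sets_iff_Kcliques[OF assms] in blast)
next
  fix S
  assume "S \<in> path_indep_sets (n - 1) \<union> insert n ` path_indep_sets (n - 3)"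
  then show "S \<in> K.cliques n {1..n}"
  proof
    assume S: "S \<in> path_indep_sets (n - 1)"
    moreover have "n \<notin> S"
      using S assms by (intro notin_path_indep_sets) auto
    ultimately show ?thesis
      using path_indep_sets_iff_Kcliques[OF assms] by blast
  next
    assume "S \<in> insert n ` path_indep_sets (n - 3)"
    then obtain T where T: "T \<in> path_indep_sets (n - 3)" "S = insert n T"
      by blast
    moreover have "n \<notin> T"
      using T assms by (intro notin_path_indep_sets) auto
    ultimately show ?thesis
      using insert_in_Kcliques_iff[OF assms] by blast
  qed
qed

abbreviation pX :: "int poly" where
  "pX \<equiv> [:0, 1:]"

lemma X_mult_monom: "pX * monom c k = monom c (Suc k)"
proof -
  have "pX = monom 1 1"
    by (simp add: monom_Suc monom_0)
  then show ?thesis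
    by (simp add: mult_monom)
qed

text \<open>Subtracting row \<open>n - 2\<close> from row \<open>n - 1\<close> and then each row \<open>i < n - 2\<close> from
  row \<open>i + 1\<close> turns \<open>\<lambda>I - M\<^sub>n\<close> into the tridiagonal matrix with the following diagonals.\<close>

definition Kdiag :: "nat \<Rightarrow> nat \<Rightarrow> int poly" where
  "Kdiag n j = (if j = n - 2 then pX - 1 else pX)"

definition Ksuper :: "nat \<Rightarrow> nat \<Rightarrow> int poly" where
  "Ksuper n j = (if j = n - 2 then - 1 else - pX)"

definition Ksub :: "nat \<Rightarrow> nat \<Rightarrow> int poly" where
  "Ksub n j = (if j = n - 2 then - pX else - 1)"

lemma Kmat_carrier [simp]: "Kmat n \<in> carrier_mat n n"
  by (simp add: Kmat_def)

lemma dim_char_poly_matrix_Kmat: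
  "dim_row (char_poly_matrix (Kmat n)) = n" "dim_col (char_poly_matrix (Kmat n)) = n"
  using carrier_matD[OF char_poly_matrix_closed[OF Kmat_carrier]] by simp_all

lemma char_poly_matrix_Kmat_index:
  assumes "i < n" "j < n"
  shows "char_poly_matrix (Kmat n) $$ (i, j) = (if i = j then pX else 0)
     - (if i \<le> Suc j \<or> (i = n - 1 \<and> j = n - 3) then 1 else 0)"
  using assms by (auto simp: char_poly_matrix_def Kmat_def)

lemma Kmat_row_reduced_index:
  assumes "n \<ge> 3" "i < n" "j < n"
  shows "sub_next_rows (n - 2) (addrow (-1) (n - 1) (n - 2) (char_poly_matrix (Kmat n))) $$ (i, j)
    = tridiag n (Kdiag n) (Ksuper n) (Ksub n) $$ (i, j)"
proof -
  let ?C = "char_poly_matrix (Kmat n)"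
  have tridiag: "tridiag n (Kdiag n) (Ksuper n) (Ksub n) $$ (i, j) = (if i = j then Kdiag n i
      else if j = Suc i then Ksuper n i else if i = Suc j then Ksub n j else 0)"
    using assms by (simp add: tridiag_def)
  have reduced: "sub_next_rows (n - 2) (addrow (-1) (n - 1) (n - 2) ?C) $$ (i, j)
      = (if i < n - 2 then ?C $$ (i, j) - ?C $$ (Suc i, j)
         else if i = n - 2 then ?C $$ (i, j) else ?C $$ (i, j) - ?C $$ (n - 2, j))"
    using assms by (intro sub_next_rows_addrow_index) simp_all
  consider "i < n - 2" | "i = n - 2" | "i = n - 1"
    using assms by linarith
  then show ?thesis
  proof cases
    case 1
    then have "sub_next_rows (n - 2) (addrow (-1) (n - 1) (n - 2) ?C) $$ (i, j)
        = (if i = j then pX else 0) - (if Suc i = j then pX else 0) - (if i = Suc j then 1 else 0)"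
      unfolding reduced using assms by (auto simp: char_poly_matrix_Kmat_index)
    with 1 show ?thesis
      by (auto simp: tridiag Kdiag_def Ksuper_def Ksub_def)
  next
    case 2
    then have entry: "sub_next_rows (n - 2) (addrow (-1) (n - 1) (n - 2) ?C) $$ (i, j)
        = (if i = j then pX else 0) - (if n - 3 \<le> j then 1 else 0)"
      unfolding reduced using assms by (auto simp: char_poly_matrix_Kmat_index)
    consider "j < n - 3" | "j = n - 3" | "j = n - 2" | "j = n - 1"
      using assms by linarith
    then show ?thesis
      unfolding tridiag entry using 2 assms(1) by cases (auto simp: Kdiag_def Ksuper_def Ksub_def)
  next
    case 3
    then have entry: "sub_next_rows (n - 2) (addrow (-1) (n - 1) (n - 2) ?C) $$ (i, j)
        = (if j = n - 1 then pX else 0) - (if j = n - 2 then pX else 0)"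
      unfolding reduced using assms by (auto simp: char_poly_matrix_Kmat_index)
    consider "j < n - 2" | "j = n - 2" | "j = n - 1"
      using assms by linarith
    then show ?thesis
      unfolding tridiag entry using 3 assms(1) by cases (auto simp: Kdiag_def Ksuper_def Ksub_def)
  qed
qed

lemma Kmat_row_reduced:
  assumes "n \<ge> 3"
  shows "sub_next_rows (n - 2) (addrow (-1) (n - 1) (n - 2) (char_poly_matrix (Kmat n)))
           = tridiag n (Kdiag n) (Ksuper n) (Ksub n)"
proof (rule eq_matI)
  fix i j
  assume "i < dim_row (tridiag n (Kdiag n) (Ksuper n) (Ksub n))"
    "j < dim_col (tridiag n (Kdiag n) (Ksuper n) (Ksub n))"
  then show "sub_next_rows (n - 2) (addrow (-1) (n - 1) (n - 2) (char_poly_matrix (Kmat n))) $$ (i, j)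
      = tridiag n (Kdiag n) (Ksuper n) (Ksub n) $$ (i, j)"
    using assms by (intro Kmat_row_reduced_index) (simp_all add: tridiag_def)
qed (simp_all add: tridiag_def dim_char_poly_matrix_Kmat)

lemma Kpoly_continuant:
  assumes "n \<ge> 3"
  shows "Kpoly n = continuant (Kdiag n) (Ksuper n) (Ksub n) n"
proof -
  let ?C = "char_poly_matrix (Kmat n)"
  have C: "?C \<in> carrier_mat n n"
    by simp
  have "Kpoly n = det (addrow (-1) (n - 1) (n - 2) ?C)"
    using assms C by (simp add: Kpoly_def char_poly_def det_addrow[of _ n])
  also have "\<dots> = det (sub_next_rows (n - 2) (addrow (-1) (n - 1) (n - 2) ?C))"
    using assms C by (simp add: det_sub_next_rows[of _ n])
  also have "\<dots> = det (tridiag n (Kdiag n) (Ksuper n) (Ksub n))"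
    by (simp only: Kmat_row_reduced[OF assms])
  finally show ?thesis
    by (simp add: det_tridiag)
qed

abbreviation path_continuant :: "nat \<Rightarrow> int poly" where
  "path_continuant \<equiv> continuant (\<lambda>_. pX) (\<lambda>_. - pX) (\<lambda>_. - 1)"

lemma continuant_K_eq_path:
  assumes "Suc m \<le> n - 2"
  shows "continuant (Kdiag n) (Ksuper n) (Ksub n) m = path_continuant m \<and>
    continuant (Kdiag n) (Ksuper n) (Ksub n) (Suc m) = path_continuant (Suc m)"
  using assms
proof (induction m)
  case 0
  then show ?case
    by (auto simp: Kdiag_def)
next
  case (Suc m)
  then have "m \<noteq> n - 2" "Suc m \<noteq> n - 2"
    by auto
  with Suc show ?case
    by (auto simp: Kdiag_def Ksuper_def Ksub_def)
qed

lemma Kpoly_path_continuant: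
  assumes "n \<ge> 3"
  shows "Kpoly n = path_continuant n - pX * path_continuant (n - 2)"
proof -
  obtain m where n: "n = Suc (Suc (Suc m))"
    using assms by (intro that[of "n - 3"]) simp
  have "continuant (Kdiag n) (Ksuper n) (Ksub n) m = path_continuant m"
    "continuant (Kdiag n) (Ksuper n) (Ksub n) (Suc m) = path_continuant (Suc m)"
    using continuant_K_eq_path[of m n] n by auto
  then show ?thesis
    using Kpoly_continuant[OF assms] unfolding n
    by (simp add: Kdiag_def Ksuper_def Ksub_def algebra_simps)
qed

definition path_indep_poly :: "nat \<Rightarrow> int poly" where
  "path_indep_poly m = (\<Sum>S\<in>path_indep_sets m. monom ((-1) ^ card S) (Suc m - card S))"

lemma finite_path_indep_sets [simp]: "finite (path_indep_sets m)"
  by (rule finite_subset[of _ "Pow {1..m}"]) (auto simp: path_indep_sets_def)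

lemma path_indep_sets_card: "S \<in> path_indep_sets m \<Longrightarrow> finite S \<and> card S \<le> m"
  unfolding path_indep_sets_def using card_mono[of "{1..m}" S] finite_subset by auto

lemma path_indep_sets_Suc_Suc:
  "path_indep_sets (Suc (Suc m)) = path_indep_sets (Suc m) \<union> insert (Suc (Suc m)) ` path_indep_sets m"
proof (intro equalityI subsetI)
  fix S
  assume S: "S \<in> path_indep_sets (Suc (Suc m))"
  show "S \<in> path_indep_sets (Suc m) \<union> insert (Suc (Suc m)) ` path_indep_sets m"
  proof (cases "Suc (Suc m) \<in> S")
    case True
    then have "Suc m \<notin> S"
      using S unfolding path_indep_sets_def by force
    with S have "S - {Suc (Suc m)} \<in> path_indep_sets m"
      unfolding path_indep_sets_def by (auto simp: le_Suc_eq)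
    moreover have "S = insert (Suc (Suc m)) (S - {Suc (Suc m)})"
      using True by auto
    ultimately show ?thesis
      by blast
  next
    case False
    with S show ?thesis
      unfolding path_indep_sets_def by (auto simp: le_Suc_eq)
  qed
next
  fix S
  assume "S \<in> path_indep_sets (Suc m) \<union> insert (Suc (Suc m)) ` path_indep_sets m"
  then show "S \<in> path_indep_sets (Suc (Suc m))"
  proof
    assume "S \<in> insert (Suc (Suc m)) ` path_indep_sets m"
    then obtain T where T: "T \<subseteq> {1..m}" "\<forall>a\<in>T. \<forall>b\<in>T. a < b \<longrightarrow> Suc a < b"
      and S: "S = insert (Suc (Suc m)) T"
      unfolding path_indep_sets_def by blast
    have "Suc a < b" if "a \<in> S" "b \<in> S" "a < b" for a b
    proof (cases "b = Suc (Suc m)")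
      case True
      with that S have "a \<in> T"
        by auto
      with T(1) True show ?thesis
        by auto
    next
      case False
      with that S have "b \<in> T"
        by auto
      with T(1) that S have "a \<in> T"
        by auto
      with \<open>b \<in> T\<close> that T(2) show ?thesis
        by blast
    qed
    with T S show ?thesis
      unfolding path_indep_sets_def by auto
  qed (auto simp: path_indep_sets_def)
qed

lemma sum_insert_path_indep_sets:
  assumes "m < a"
  shows "(\<Sum>S\<in>insert a ` path_indep_sets m. monom ((-1::int) ^ card S) (Suc (Suc (Suc m)) - card S))
           = - (pX * path_indep_poly m)"
proof -
  have "a \<notin> S" if "S \<in> path_indep_sets m" for S
    using that assms by (rule notin_path_indep_sets)
  then have inj: "inj_on (insert a) (path_indep_sets m)"
    by (rule inj_on_insert_fresh)
  show ?thesis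
    unfolding sum.reindex[OF inj] path_indep_poly_def sum_distrib_left X_mult_monom sum_negf[symmetric]
  proof (rule sum.cong[OF refl])
    fix S
    assume S: "S \<in> path_indep_sets m"
    then have "a \<notin> S"
      using assms by (rule notin_path_indep_sets)
    moreover have "finite S" "card S \<le> m"
      using path_indep_sets_card[OF S] by simp_all
    ultimately show "((\<lambda>S. monom ((-1::int) ^ card S) (Suc (Suc (Suc m)) - card S)) \<circ> insert a) S
        = - monom ((-1) ^ card S) (Suc (Suc m - card S))"
      by (simp add: minus_monom Suc_diff_le)
  qed
qed

lemma path_indep_poly_Suc_Suc:
  "path_indep_poly (Suc (Suc m)) = pX * path_indep_poly (Suc m) - pX * path_indep_poly m"
proof -
  let ?t = "\<lambda>S. monom ((-1::int) ^ card S) (Suc (Suc (Suc m)) - card S)"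
  have disj: "path_indep_sets (Suc m) \<inter> insert (Suc (Suc m)) ` path_indep_sets m = {}"
    using notin_path_indep_sets[of _ "Suc m" "Suc (Suc m)"] by blast
  have "path_indep_poly (Suc (Suc m))
      = sum ?t (path_indep_sets (Suc m)) + sum ?t (insert (Suc (Suc m)) ` path_indep_sets m)"
    unfolding path_indep_poly_def path_indep_sets_Suc_Suc
    by (rule sum.union_disjoint[OF _ _ disj]) simp_all
  also have "sum ?t (path_indep_sets (Suc m)) = pX * path_indep_poly (Suc m)"
    unfolding path_indep_poly_def sum_distrib_left X_mult_monom
  proof (rule sum.cong[OF refl])
    fix S
    assume "S \<in> path_indep_sets (Suc m)"
    then have "card S \<le> Suc m"
      by (simp add: path_indep_sets_card)
    then show "?t S = monom ((-1) ^ card S) (Suc (Suc (Suc m) - card S))"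
      by (simp add: Suc_diff_le)
  qed
  also have "sum ?t (insert (Suc (Suc m)) ` path_indep_sets m) = - (pX * path_indep_poly m)"
    by (rule sum_insert_path_indep_sets) simp
  finally show ?thesis
    by simp
qed

lemma path_continuant_path_indep_poly:
  "path_continuant (Suc m) = path_indep_poly m \<and> path_continuant (Suc (Suc m)) = path_indep_poly (Suc m)"
proof (induction m)
  case 0
  have "path_indep_sets 0 = {{}}" "path_indep_sets (Suc 0) = {{}, {1}}"
    by (auto simp: path_indep_sets_def subset_singleton_iff)
  then show ?case
    by (simp add: path_indep_poly_def monom_Suc monom_0 algebra_simps)
next
  case (Suc m)
  have "path_continuant (Suc (Suc (Suc m)))
      = pX * path_continuant (Suc (Suc m)) - pX * path_continuant (Suc m)"
    by (subst continuant.simps(3)) simp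
  then have "path_continuant (Suc (Suc (Suc m))) = path_indep_poly (Suc (Suc m))"
    using Suc.IH by (simp only: path_indep_poly_Suc_Suc)
  with Suc.IH show ?case
    by blast
qed

lemma sum_Kcliques:
  assumes n: "n = Suc (Suc (Suc m))"
  shows "(\<Sum>S\<in>K.cliques n {1..n}. monom ((-1::int) ^ card S) (n - card S))
           = path_indep_poly (Suc (Suc m)) - pX * path_indep_poly m"
proof -
  let ?t = "\<lambda>S. monom ((-1::int) ^ card S) (n - card S)"
  have "n \<ge> 3" "n - 3 = m"
    using n by simp_all
  have disj: "path_indep_sets (n - 1) \<inter> insert n ` path_indep_sets (n - 3) = {}"
    using notin_path_indep_sets[of _ "n - 1" n] n by auto
  have "sum ?t (K.cliques n {1..n})
      = sum ?t (path_indep_sets (n - 1)) + sum ?t (insert n ` path_indep_sets (n - 3))"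
    unfolding Kcliques_eq[OF \<open>n \<ge> 3\<close>] by (rule sum.union_disjoint[OF _ _ disj]) simp_all
  also have "sum ?t (path_indep_sets (n - 1)) = path_indep_poly (Suc (Suc m))"
    unfolding path_indep_poly_def n by simp
  also have "sum ?t (insert n ` path_indep_sets (n - 3)) = - (pX * path_indep_poly m)"
    unfolding \<open>n - 3 = m\<close> unfolding n by (rule sum_insert_path_indep_sets) simp
  finally show ?thesis
    by simp
qed

lemma Kpoly_cliques:
  assumes "n \<ge> 3"
  shows "Kpoly n = (\<Sum>S\<in>K.cliques n {1..n}. monom ((-1) ^ card S) (n - card S))"
proof -
  obtain m where n: "n = Suc (Suc (Suc m))"
    using assms by (intro that[of "n - 3"]) simp
  then have "n - 2 = Suc m"
    by simp
  have "Kpoly n = path_continuant n - pX * path_continuant (n - 2)"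
    by (rule Kpoly_path_continuant[OF assms])
  also have "\<dots> = path_indep_poly (Suc (Suc m)) - pX * path_indep_poly m"
    unfolding \<open>n - 2 = Suc m\<close> unfolding n by (simp only: path_continuant_path_indep_poly)
  also have "\<dots> = (\<Sum>S\<in>K.cliques n {1..n}. monom ((-1) ^ card S) (n - card S))"
    by (rule sum_Kcliques[OF n, symmetric])
  finally show ?thesis .
qed

lemma Kpoly_rev_eq_clique_poly:
  assumes "n \<ge> 3"
  shows "Kpoly_rev n = K.clique_poly n {1..n}"
proof -
  have "finite (K.cliques n {1..n})"
    by (simp add: K.finite_cliques)
  moreover have "card S \<le> n" if "S \<in> K.cliques n {1..n}" for S
    using that card_mono[of "{1..n}" S] by (simp add: K.cliques_def)
  ultimately show ?thesis
    unfolding Kpoly_rev_def K.clique_poly_def Kpoly_cliques[OF assms]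
    by (rule sum_monom_reflect)
qed

lemma Kequiv_eq_trace_eq: "Kequiv n = K.trace_eq n"
  unfolding Kequiv_def K.trace_eq_def Kstep_def K.swap_step_def ..

lemma Kcount_eq_card_traces: "Kcount n k = card (K.traces n {1..n} k)"
proof -
  let ?W = "Kwords n k"
  have words: "?W = K.words {1..n} k"
    by (simp add: Kwords_def K.words_def)
  have restrict: "(Kequiv n \<inter> ?W \<times> ?W) `` {x} = K.trace_eq n `` {x}" if "x \<in> ?W" for x
    using that K.words_trace_eq unfolding words Kequiv_eq_trace_eq by blast
  have "?W // (Kequiv n \<inter> ?W \<times> ?W) = (\<lambda>x. (Kequiv n \<inter> ?W \<times> ?W) `` {x}) ` ?W"
    by (auto simp: quotient_def)
  also have "\<dots> = K.traces n {1..n} k"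
    unfolding K.traces_eq_image words[symmetric] using restrict by (rule image_cong[OF refl])
  finally show ?thesis
    by (simp add: Kcount_def)
qed

theorem proposition3:
  fixes n :: nat
  assumes "n \<ge> 3"
  shows "Abs_fps (\<lambda>k. of_nat (Kcount n k) :: rat)
           = inverse (fps_of_poly (map_poly of_int (Kpoly_rev n)))"
proof -
  have "fps_of_poly (map_poly of_int (Kpoly_rev n)) * Abs_fps (\<lambda>k. of_nat (Kcount n k)) = (1 :: rat fps)"
    unfolding Kpoly_rev_eq_clique_poly[OF assms] Kcount_eq_card_traces
    by (rule K.clique_poly_times_hilbert_series) simp
  then show ?thesis
    by (simp add: fps_inverse_unique)
qed

end
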